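(* Let Assumption 1 hold with $\delta\in(0,1]$, let $A\ge1$, define $\alpha=2L\{1-\Phi(A\sqrt{2\log L})\}+2A_0(1+A\sqrt{2\log L})^{1+\delta}/(L^{A^2-1}d_{n,\delta}^{2+\delta})$, $r=A\sqrt{2\log(L)/n}$, and assume $L\le\exp(d_{n,\delta}^2/(2A^2))$. Fix $p\in[1,\infty]$. Then with probability at least $1-\alpha$, every STIV solution $(\widehat\beta,\widehat\sigma)$ satisfies $$\big|{\bf D_X}^{-1}(\widehat\beta-\beta^* )\big|_p\le\min_{J\subseteq\{1,\dots,K\}}\max\left(\frac{2\widehat\sigma r}{\widetilde\kappa_{p,J}}\left(1-\frac{r}{\widetilde\kappa^*_{J_{\rm end},J}}-\frac{r^2}{\widetilde\kappa^*_{J^c_{\rm end},J}}\right)_+^{-1},\ \frac{6\,|({\bf D_X}^{-1}\beta^* )_{J^c}|_1}{1-c}\right).$$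
   Context: Setting: integers $n,K,L$ with $L\ge K$, $k_{\rm end}\in\{0,\dots,K\}$; observations $(y_i,x_i,z_i)$, $i=1,\dots,n$, with $y_i=x_i^T\beta^*+u_i$, $x_i\in\mathbb R^K$, $z_i\in\mathbb R^L$, the $(y_i,x_i,z_i,u_i)$ mutually independent; $J_{\rm end}=\{1,\dots,k_{\rm end}\}$, $J_{\rm end}^c$ its complement, $z_{li}=x_{(k_{\rm end}+l)i}$ for $l\le K-k_{\rm end}$. ${\bf Y},{\bf X},{\bf Z}$ the data matrices; $x_{k*}=\max_i|x_{ki}|$, $z_{l*}=\max_i|z_{li}|$; ${\bf D_X}={\rm diag}(x_{k*}^{-1})$, ${\bf D_Z}={\rm diag}(z_{l*}^{-1})$; $\Psi_n=\frac1n{\bf D_Z}{\bf Z}^T{\bf X}{\bf D_X}$; $\widehat Q(\beta)=\frac1n\sum(y_i-x_i^T\beta)^2$. $\Delta_J$ zeroes coordinates outside $J$, $J^c$ complement; $(a)_+^{-1}=1/\max(a,0)$, $a/0=\infty$ for $a>0$, $1/\infty=0$. Enlarged-cone sensitivities for $c\in(0,1)$: $\widetilde C_J=\{\Delta\in\mathbb R^K:|\Delta_{J^c}|_1\le\frac{2+c}{1-c}|\Delta_J|_1\}$, $\widetilde\kappa_{p,J}=\inf\{|\Psi_n\Delta|_\infty:\Delta\in\widetilde C_J,|\Delta|_p=1\}$, $\widetilde\kappa^*_{J_0,J}=\inf\{|\Psi_n\Delta|_\infty:\Delta\in\widetilde C_J,|\Delta_{J_0}|_1=1\}$ ($=\infty$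 if $J_0=\varnothing$). STIV estimator: any minimizer $(\widehat\beta,\widehat\sigma)$ of $|{\bf D_X}^{-1}\beta|_1+c\sigma$ over $\{(\beta,\sigma):\sigma>0,|\frac1n{\bf D_Z}{\bf Z}^T({\bf Y}-{\bf X}\beta)|_\infty\le\sigma r,\widehat Q(\beta)\le\sigma^2\}$. Assumption 1: for all $i,l$, $\mathbb E|z_{li}u_i|^{2+\delta}<\infty$, $\mathbb E[z_{li}u_i]=0$, $z_{li}u_i$ not a.s. zero; $d_{n,\delta}=\min_l\sqrt{\sum_i\mathbb E z_{li}^2u_i^2}/(\sum_i\mathbb E|z_{li}u_i|^{2+\delta})^{1/(2+\delta)}$. $\Phi$ is the standard normal cdf and $A_0$ the absolute constant of the Jing–Shao–Wang self-normalized moderate deviation bound: for independent mean-zero $X_i$ with $0<\mathbb E|X_i|^{2+\delta}<\infty$, $|\mathbb P(S_n/V_n\ge x)-(1-\Phi(x))|\le A_0(1+x)^{1+\delta}e^{-x^2/2}/d^{2+\delta}$ for $0\le x\le d$, where $S_n=\sum X_i$, $V_n^2=\sum X_i^2$, $d=(\sum\mathbb EX_i^2)^{1/2}/(\sum\mathbb E|X_i|^{2+\delta})^{1/(2+\delta)}$. *)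

theory Defs
  imports "HOL-Probability.Probability"
begin

(* Data for one realisation: Y i, X i k (row i, column k), Z i l; indices are 0-based:
   i < n, k < K, l < L. *)

definition xstar :: "nat \<Rightarrow> (nat \<Rightarrow> nat \<Rightarrow> real) \<Rightarrow> nat \<Rightarrow> real" where
  "xstar n X k = Max ((\<lambda>i. \<bar>X i k\<bar>) ` {..<n})"

definition zstar :: "nat \<Rightarrow> (nat \<Rightarrow> nat \<Rightarrow> real) \<Rightarrow> nat \<Rightarrow> real" where
  "zstar n Z l = Max ((\<lambda>i. \<bar>Z i l\<bar>) ` {..<n})"

definition sup_norm :: "nat \<Rightarrow> (nat \<Rightarrow> real) \<Rightarrow> real" where
  "sup_norm N v = Max (insert 0 ((\<lambda>k. \<bar>v k\<bar>) ` {..<N}))"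

definition l1_norm :: "nat \<Rightarrow> (nat \<Rightarrow> real) \<Rightarrow> real" where
  "l1_norm N v = (\<Sum>k<N. \<bar>v k\<bar>)"

definition lp_norm :: "nat \<Rightarrow> ereal \<Rightarrow> (nat \<Rightarrow> real) \<Rightarrow> real" where
  "lp_norm N p v = (if p = \<infinity> then sup_norm N v
     else (\<Sum>k<N. \<bar>v k\<bar> powr real_of_ereal p) powr (1 / real_of_ereal p))"

definition restr :: "nat set \<Rightarrow> (nat \<Rightarrow> real) \<Rightarrow> nat \<Rightarrow> real" where
  "restr J v = (\<lambda>k. if k \<in> J then v k else 0)"

definition Psi :: "nat \<Rightarrow> nat \<Rightarrow> (nat \<Rightarrow> nat \<Rightarrow> real) \<Rightarrow> (nat \<Rightarrow> nat \<Rightarrow> real)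
    \<Rightarrow> (nat \<Rightarrow> real) \<Rightarrow> nat \<Rightarrow> real" where
  "Psi n K X Z \<Delta> l = (1 / real n) * inverse (zstar n Z l) *
     (\<Sum>i<n. Z i l * (\<Sum>k<K. X i k * inverse (xstar n X k) * \<Delta> k))"

definition cone :: "nat \<Rightarrow> real \<Rightarrow> nat set \<Rightarrow> (nat \<Rightarrow> real) set" where
  "cone K c J = {\<Delta>. l1_norm K (restr ({..<K} - J) \<Delta>) \<le> (2 + c) / (1 - c) * l1_norm K (restr J \<Delta>)}"

definition kappa_p :: "nat \<Rightarrow> nat \<Rightarrow> nat \<Rightarrow> (nat \<Rightarrow> nat \<Rightarrow> real) \<Rightarrow> (nat \<Rightarrow> nat \<Rightarrow> real)
    \<Rightarrow> real \<Rightarrow> ereal \<Rightarrow> nat set \<Rightarrow> ereal" where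
  "kappa_p n K L X Z c p J =
     Inf {ereal (sup_norm L (Psi n K X Z \<Delta>)) | \<Delta>. \<Delta> \<in> cone K c J \<and> lp_norm K p \<Delta> = 1}"

definition kappa_star :: "nat \<Rightarrow> nat \<Rightarrow> nat \<Rightarrow> (nat \<Rightarrow> nat \<Rightarrow> real) \<Rightarrow> (nat \<Rightarrow> nat \<Rightarrow> real)
    \<Rightarrow> real \<Rightarrow> nat set \<Rightarrow> nat set \<Rightarrow> ereal" where
  "kappa_star n K L X Z c J0 J = (if J0 = {} then \<infinity> else
     Inf {ereal (sup_norm L (Psi n K X Z \<Delta>)) | \<Delta>. \<Delta> \<in> cone K c J \<and> l1_norm K (restr J0 \<Delta>) = 1})"

definition Qhat :: "nat \<Rightarrow> nat \<Rightarrow> (nat \<Rightarrow> real) \<Rightarrow> (nat \<Rightarrow> nat \<Rightarrow> real) \<Rightarrow> (nat \<Rightarrow> real) \<Rightarrow> real" where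
  "Qhat n K Y X \<beta> = (1 / real n) * (\<Sum>i<n. (Y i - (\<Sum>k<K. X i k * \<beta> k))\<^sup>2)"

definition stiv_feasible :: "nat \<Rightarrow> nat \<Rightarrow> nat \<Rightarrow> real \<Rightarrow> (nat \<Rightarrow> real) \<Rightarrow> (nat \<Rightarrow> nat \<Rightarrow> real)
    \<Rightarrow> (nat \<Rightarrow> nat \<Rightarrow> real) \<Rightarrow> (nat \<Rightarrow> real) \<Rightarrow> real \<Rightarrow> bool" where
  "stiv_feasible n K L r Y X Z \<beta> \<sigma> \<longleftrightarrow> 0 < \<sigma> \<and>
     sup_norm L (\<lambda>l. (1 / real n) * inverse (zstar n Z l) *
        (\<Sum>i<n. Z i l * (Y i - (\<Sum>k<K. X i k * \<beta> k)))) \<le> \<sigma> * r \<and>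
     Qhat n K Y X \<beta> \<le> \<sigma>\<^sup>2"

definition stiv_solution :: "nat \<Rightarrow> nat \<Rightarrow> nat \<Rightarrow> real \<Rightarrow> real \<Rightarrow> (nat \<Rightarrow> real) \<Rightarrow> (nat \<Rightarrow> nat \<Rightarrow> real)
    \<Rightarrow> (nat \<Rightarrow> nat \<Rightarrow> real) \<Rightarrow> (nat \<Rightarrow> real) \<Rightarrow> real \<Rightarrow> bool" where
  "stiv_solution n K L r c Y X Z \<beta> \<sigma> \<longleftrightarrow> stiv_feasible n K L r Y X Z \<beta> \<sigma> \<and>
     (\<forall>\<beta>' \<sigma>'. stiv_feasible n K L r Y X Z \<beta>' \<sigma>' \<longrightarrow>
        l1_norm K (\<lambda>k. xstar n X k * \<beta> k) + c * \<sigma> \<le> l1_norm K (\<lambda>k. xstar n X k * \<beta>' k) + c * \<sigma>')"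

definition stiv_bound :: "nat \<Rightarrow> nat \<Rightarrow> nat \<Rightarrow> nat \<Rightarrow> real \<Rightarrow> ereal \<Rightarrow> real \<Rightarrow> (nat \<Rightarrow> nat \<Rightarrow> real)
    \<Rightarrow> (nat \<Rightarrow> nat \<Rightarrow> real) \<Rightarrow> (nat \<Rightarrow> real) \<Rightarrow> real \<Rightarrow> nat set \<Rightarrow> ereal" where
  "stiv_bound n K L kend c p r X Z \<beta>s \<sigma> J =
     max (ereal (2 * \<sigma> * r) / kappa_p n K L X Z c p J *
            inverse (max (1 - ereal r / kappa_star n K L X Z c {..<kend} J
                            - ereal (r\<^sup>2) / kappa_star n K L X Z c {kend..<K} J) 0))
         (ereal (6 * l1_norm K (restr ({..<K} - J) (\<lambda>k. xstar n X k * \<beta>s k)) / (1 - c)))"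

definition Phi :: "real \<Rightarrow> real" where
  "Phi t = measure (density lborel std_normal_density) {..t}"

text \<open>Jing--Shao--Wang self-normalised moderate deviation bound with constant A0,
  for all independent families of random variables on the probability space M\<close>
definition jsw_constant :: "'a measure \<Rightarrow> real \<Rightarrow> bool" where
  "jsw_constant M A0 \<longleftrightarrow>
    (\<forall>(\<delta>::real) (m::nat) (X :: nat \<Rightarrow> 'a \<Rightarrow> real).
      0 < \<delta> \<and> \<delta> \<le> 1 \<and> 0 < m \<and> prob_space.indep_vars M (\<lambda>_. borel) X {..<m} \<and>
      (\<forall>i<m. integrable M (X i) \<and> integrable M (\<lambda>\<omega>. \<bar>X i \<omega>\<bar> powr (2 + \<delta>)) \<and>
              (\<integral>\<omega>. X i \<omega> \<partial>M) = 0 \<and> 0 < (\<integral>\<omega>. \<bar>X i \<omega>\<bar> powr (2 + \<delta>) \<partial>M)) \<longrightarrow>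
      (let d = sqrt (\<Sum>i<m. \<integral>\<omega>. (X i \<omega>)\<^sup>2 \<partial>M) /
               (\<Sum>i<m. \<integral>\<omega>. \<bar>X i \<omega>\<bar> powr (2 + \<delta>) \<partial>M) powr (1 / (2 + \<delta>))
       in \<forall>t. 0 \<le> t \<and> t \<le> d \<longrightarrow>
          \<bar>measure M {\<omega> \<in> space M. (\<Sum>i<m. X i \<omega>) / sqrt (\<Sum>i<m. (X i \<omega>)\<^sup>2) \<ge> t} - (1 - Phi t)\<bar>
            \<le> A0 * (1 + t) powr (1 + \<delta>) * exp (- t\<^sup>2 / 2) / d powr (2 + \<delta>)))"

text \<open>d_{n,delta} for W i l = z_{li} u_i\<close>
definition d_ndelta :: "'a measure \<Rightarrow> nat \<Rightarrow> nat \<Rightarrow> real \<Rightarrow> (nat \<Rightarrow> nat \<Rightarrow> 'a \<Rightarrow> real) \<Rightarrow> real" where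
  "d_ndelta M n L \<delta> W = Min ((\<lambda>l. sqrt (\<Sum>i<n. \<integral>\<omega>. (W i l \<omega>)\<^sup>2 \<partial>M) /
        (\<Sum>i<n. \<integral>\<omega>. \<bar>W i l \<omega>\<bar> powr (2 + \<delta>) \<partial>M) powr (1 / (2 + \<delta>))) ` {..<L})"

definition stiv_alpha :: "nat \<Rightarrow> real \<Rightarrow> real \<Rightarrow> real \<Rightarrow> real \<Rightarrow> real" where
  "stiv_alpha L A \<delta> A0 d =
     2 * real L * (1 - Phi (A * sqrt (2 * ln (real L))))
     + 2 * A0 * (1 + A * sqrt (2 * ln (real L))) powr (1 + \<delta>)
         / (real L powr (A\<^sup>2 - 1) * d powr (2 + \<delta>))"

end

theory Submission
  imports Defs
begin

(* The proof separates a deterministic and a probabilistic statement.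

   Call a sample good at level t if every
   instrument score satisfies |sum_i z_li u_i| <= t (sum_i (z_li u_i)^2)^(1/2).  With
   r = t / sqrt n and the oracle noise level sigma0 = Q(beta_true)^(1/2), the true parameter
   is STIV-feasible together with every sigma >= sigma0.  Comparing objectives gives the basic
   inequality, which either bounds the scaled error Delta = D_X^(-1) (beta_hat - beta_true)
   by the second term of the minimum or places it in the enlarged cone C_J.  Inside the cone
   the sensitivities turn |Psi_n Delta|_inf <= r (sigma0 + sigma_hat) and
   sigma0 <= sigma_hat + |Delta on J_end|_1 + r |Delta off J_end|_1 into the first term.

   The Jing-Shao-Wang moderate deviation bound, applied to z_l u and
   to -z_l u for each of the L instruments at t = A (2 log L)^(1/2) <= d_{n,delta}, and a
   union bound give a good event of probability at least 1 - alpha. *)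

lemma sup_norm_nonneg: "0 \<le> sup_norm N v"
  unfolding sup_norm_def by (simp add: Max_ge_iff)

lemma sup_norm_ge: "l < N \<Longrightarrow> \<bar>v l\<bar> \<le> sup_norm N v"
  unfolding sup_norm_def by (simp add: Max_ge_iff)

lemma sup_norm_le: "0 \<le> b \<Longrightarrow> (\<And>l. l < N \<Longrightarrow> \<bar>v l\<bar> \<le> b) \<Longrightarrow> sup_norm N v \<le> b"
  unfolding sup_norm_def by (simp add: Max_le_iff)

text \<open>All norms are positively homogeneous; this lets the sensitivities, which are
  infima over normalised vectors, be applied to arbitrary vectors.\<close>
lemma sup_norm_scale:
  assumes "0 < s"
  shows "sup_norm N (\<lambda>k. v k / s) = sup_norm N v / s"
proof -
  have "mono (\<lambda>x::real. x / s)" using assms by (auto intro!: monoI divide_right_mono)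
  then have "sup_norm N v / s = Max ((\<lambda>x. x / s) ` insert 0 ((\<lambda>k. \<bar>v k\<bar>) ` {..<N}))"
    unfolding sup_norm_def by (rule mono_Max_commute) auto
  also have "(\<lambda>x. x / s) ` insert 0 ((\<lambda>k. \<bar>v k\<bar>) ` {..<N}) = insert 0 ((\<lambda>k. \<bar>v k / s\<bar>) ` {..<N})"
    using assms by (auto simp: image_image)
  finally show ?thesis unfolding sup_norm_def by simp
qed

lemma l1_norm_nonneg: "0 \<le> l1_norm N v"
  unfolding l1_norm_def by (simp add: sum_nonneg)

lemma l1_norm_scale: "0 < s \<Longrightarrow> l1_norm N (\<lambda>k. v k / s) = l1_norm N v / s"
  unfolding l1_norm_def by (simp add: sum_divide_distrib)

lemma l1_norm_ge: "k < N \<Longrightarrow> \<bar>v k\<bar> \<le> l1_norm N v"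
  unfolding l1_norm_def using member_le_sum[of k "{..<N}" "\<lambda>k. \<bar>v k\<bar>"] by simp

lemma l1_norm_split: "l1_norm N v = l1_norm N (restr J v) + l1_norm N (restr ({..<N} - J) v)"
  unfolding l1_norm_def restr_def sum.distrib[symmetric] by (intro sum.cong) auto

lemma restr_scale: "restr J (\<lambda>k. v k / s) = (\<lambda>k. restr J v k / s)"
  unfolding restr_def by auto

lemma lp_norm_nonneg: "0 \<le> lp_norm N p v"
  unfolding lp_norm_def by (simp add: sup_norm_nonneg)

lemma finite_exponent:
  assumes "1 \<le> p" "p \<noteq> \<infinity>"
  shows "p = ereal (real_of_ereal p)" "1 \<le> real_of_ereal p"
  using assms by (cases p; auto)+

lemma lp_norm_scale:
  assumes "1 \<le> p" "0 < s"
  shows "lp_norm N p (\<lambda>k. v k / s) = lp_norm N p v / s"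
proof (cases "p = \<infinity>")
  case True
  then show ?thesis using assms by (simp add: lp_norm_def sup_norm_scale)
next
  case False
  define q where "q = real_of_ereal p"
  have q: "1 \<le> q" using finite_exponent[OF assms(1) False] q_def by simp
  have "(\<Sum>k<N. \<bar>v k / s\<bar> powr q) = (\<Sum>k<N. \<bar>v k\<bar> powr q) / s powr q"
    using assms by (simp add: powr_divide sum_divide_distrib)
  then have "(\<Sum>k<N. \<bar>v k / s\<bar> powr q) powr (1/q)
      = (\<Sum>k<N. \<bar>v k\<bar> powr q) powr (1/q) / (s powr q) powr (1/q)"
    using assms by (simp add: powr_divide sum_nonneg)
  also have "(s powr q) powr (1/q) = s" using q assms by (simp add: powr_powr)
  finally show ?thesis using False unfolding lp_norm_def q_def by simp
qed

text \<open>Every \<open>\<ell>\<^sub>p\<close>-norm with \<open>p \<ge> 1\<close> is dominated by the \<open>\<ell>\<^sub>1\<close>-norm: after normalising by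
  the \<open>\<ell>\<^sub>1\<close>-norm all coordinates lie in \<open>[0,1]\<close>, where \<open>x\<^sup>q \<le> x\<close>.\<close>
lemma lp_le_l1:
  assumes "1 \<le> p"
  shows "lp_norm N p v \<le> l1_norm N v"
proof (cases "p = \<infinity>")
  case True
  have "sup_norm N v \<le> l1_norm N v"
    by (rule sup_norm_le[OF l1_norm_nonneg l1_norm_ge])
  then show ?thesis using True by (simp add: lp_norm_def)
next
  case False
  define q where "q = real_of_ereal p"
  define S where "S = l1_norm N v"
  have q: "1 \<le> q" using finite_exponent[OF assms False] q_def by simp
  have "(\<Sum>k<N. \<bar>v k\<bar> powr q) \<le> S powr q"
  proof (cases "S = 0")
    case True
    then have "\<forall>k\<in>{..<N}. \<bar>v k\<bar> = 0"
      unfolding S_def l1_norm_def by (subst sum_nonneg_eq_0_iff[symmetric]) auto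
    then show ?thesis by simp
  next
    case False
    then have S: "0 < S" using l1_norm_nonneg[of N v] S_def by simp
    have "(\<bar>v k\<bar> / S) powr q \<le> \<bar>v k\<bar> / S" if "k < N" for k
    proof -
      have "0 \<le> \<bar>v k\<bar> / S" "\<bar>v k\<bar> / S \<le> 1" using l1_norm_ge[OF that, of v] S S_def by auto
      then have "(\<bar>v k\<bar> / S) powr q \<le> (\<bar>v k\<bar> / S) powr 1" using q by (intro powr_mono') auto
      also have "\<dots> = \<bar>v k\<bar> / S" using S by (cases "v k = 0") auto
      finally show ?thesis .
    qed
    then have "(\<Sum>k<N. (\<bar>v k\<bar> / S) powr q) \<le> (\<Sum>k<N. \<bar>v k\<bar> / S)" by (intro sum_mono) auto
    also have "\<dots> = 1" using S unfolding S_def l1_norm_def by (simp add: sum_divide_distrib[symmetric])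
    finally have "(\<Sum>k<N. \<bar>v k\<bar> powr q) / S powr q \<le> 1"
      using S by (simp add: powr_divide sum_divide_distrib)
    then show ?thesis using S by (simp add: divide_le_eq)
  qed
  then have "(\<Sum>k<N. \<bar>v k\<bar> powr q) powr (1/q) \<le> (S powr q) powr (1/q)"
    using q by (intro powr_mono2) (auto simp: sum_nonneg)
  also have "\<dots> = S" using q l1_norm_nonneg[of N v] S_def by (simp add: powr_powr)
  finally show ?thesis using False unfolding lp_norm_def q_def S_def by simp
qed

lemma cone_scale:
  assumes "\<Delta> \<in> cone K c J" "0 < s"
  shows "(\<lambda>k. \<Delta> k / s) \<in> cone K c J"
proof -
  have "l1_norm K (restr ({..<K} - J) \<Delta>) / s \<le> (2 + c) / (1 - c) * l1_norm K (restr J \<Delta>) / s"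
    using assms by (intro divide_right_mono) (auto simp: cone_def)
  then show ?thesis unfolding cone_def restr_scale mem_Collect_eq l1_norm_scale[OF assms(2)] by simp
qed

lemma Psi_scale:
  assumes "0 < s"
  shows "sup_norm L (Psi n K X Z (\<lambda>k. \<Delta> k / s)) = sup_norm L (Psi n K X Z \<Delta>) / s"
proof -
  have "Psi n K X Z (\<lambda>k. \<Delta> k / s) = (\<lambda>l. Psi n K X Z \<Delta> l / s)"
    unfolding Psi_def by (simp add: sum_divide_distrib sum_distrib_left mult.assoc)
  then show ?thesis using sup_norm_scale[OF assms] by simp
qed

lemma kappa_p_nonneg: "0 \<le> kappa_p n K L X Z c p J"
  unfolding kappa_p_def by (auto intro!: Inf_greatest simp: sup_norm_nonneg)

lemma kappa_star_nonneg: "0 \<le> kappa_star n K L X Z c J0 J"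
  unfolding kappa_star_def by (auto intro!: Inf_greatest simp: sup_norm_nonneg)

lemma sensitivity_homogeneous:
  fixes \<kappa> :: ereal and \<nu> :: "(nat \<Rightarrow> real) \<Rightarrow> real"
  assumes nonneg: "0 \<le> \<nu> \<Delta>"
    and scale: "\<And>s. 0 < s \<Longrightarrow> \<nu> (\<lambda>k. \<Delta> k / s) = \<nu> \<Delta> / s"
    and lower: "\<And>s. 0 < s \<Longrightarrow> s = \<nu> \<Delta> \<Longrightarrow>
                  \<kappa> \<le> ereal (sup_norm L (Psi n K X Z (\<lambda>k. \<Delta> k / s)))"
  shows "\<kappa> * ereal (\<nu> \<Delta>) \<le> ereal (sup_norm L (Psi n K X Z \<Delta>))"
proof (cases "\<nu> \<Delta> = 0")
  case True
  then show ?thesis by (simp add: sup_norm_nonneg zero_ereal_def[symmetric])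
next
  case False
  define s where "s = \<nu> \<Delta>"
  have s: "0 < s" using False nonneg s_def by simp
  have "\<kappa> \<le> ereal (sup_norm L (Psi n K X Z \<Delta>) / s)"
    using lower[OF s s_def] Psi_scale[OF s] by simp
  then have "\<kappa> * ereal s \<le> ereal (sup_norm L (Psi n K X Z \<Delta>) / s) * ereal s"
    by (rule ereal_mult_right_mono) (use s in simp)
  then show ?thesis using s s_def by simp
qed

lemma kappa_p_bound:
  assumes "\<Delta> \<in> cone K c J" "1 \<le> p"
  shows "kappa_p n K L X Z c p J * ereal (lp_norm K p \<Delta>) \<le> ereal (sup_norm L (Psi n K X Z \<Delta>))"
proof (rule sensitivity_homogeneous[OF lp_norm_nonneg lp_norm_scale[OF assms(2)]])
  fix s assume "0 < s" "s = lp_norm K p \<Delta>"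
  then show "kappa_p n K L X Z c p J \<le> ereal (sup_norm L (Psi n K X Z (\<lambda>k. \<Delta> k / s)))"
    unfolding kappa_p_def
    by (intro Inf_lower) (use assms cone_scale lp_norm_scale in auto)
qed

lemma kappa_star_bound:
  assumes "\<Delta> \<in> cone K c J"
  shows "kappa_star n K L X Z c J0 J * ereal (l1_norm K (restr J0 \<Delta>))
           \<le> ereal (sup_norm L (Psi n K X Z \<Delta>))"
proof (rule sensitivity_homogeneous[where \<nu> = "\<lambda>\<Delta>. l1_norm K (restr J0 \<Delta>)",
         OF l1_norm_nonneg])
  fix s :: real
  assume "0 < s"
  then show "l1_norm K (restr J0 (\<lambda>k. \<Delta> k / s)) = l1_norm K (restr J0 \<Delta>) / s"
    by (simp add: restr_scale l1_norm_scale)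
next
  fix s :: real
  assume s: "0 < s" "s = l1_norm K (restr J0 \<Delta>)"
  then have "J0 \<noteq> {}" unfolding l1_norm_def restr_def by auto
  then show "kappa_star n K L X Z c J0 J \<le> ereal (sup_norm L (Psi n K X Z (\<lambda>k. \<Delta> k / s)))"
    unfolding kappa_star_def
    by (simp, intro Inf_lower) (use assms s cone_scale restr_scale l1_norm_scale in auto)
qed

text \<open>If \<open>\<sigma>\<^sub>0\<^sup>2 - 2C + b\<^sup>2 \<le> \<sigma>\<^sup>2\<close> and the cross term \<open>C\<close> is at most \<open>\<sigma>\<^sub>0 b\<close> and at most
  \<open>\<sigma>\<^sub>0 m\<close>, then \<open>\<sigma>\<^sub>0 \<le> \<sigma> + m\<close>: either \<open>(\<sigma>\<^sub>0 - b)\<^sup>2\<close> or \<open>(\<sigma>\<^sub>0 - m)\<^sup>2\<close> is below \<open>\<sigma>\<^sup>2\<close>.\<close>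
lemma quadratic_root_bound:
  fixes \<sigma> \<sigma>\<^sub>0 b C m :: real
  assumes "0 \<le> \<sigma>" "0 \<le> \<sigma>\<^sub>0" "0 \<le> b" "0 \<le> m"
    and quad: "\<sigma>\<^sub>0\<^sup>2 - 2 * C + b\<^sup>2 \<le> \<sigma>\<^sup>2" and "C \<le> \<sigma>\<^sub>0 * b" "C \<le> \<sigma>\<^sub>0 * m"
  shows "\<sigma>\<^sub>0 \<le> \<sigma> + m"
proof -
  define w where "w = min b m"
  have "C \<le> \<sigma>\<^sub>0 * w" using assms by (simp add: w_def min_def)
  moreover have "w\<^sup>2 \<le> b\<^sup>2" using assms by (auto simp: w_def min_def intro: power_mono)
  ultimately have "(\<sigma>\<^sub>0 - w)\<^sup>2 \<le> \<sigma>\<^sup>2" using quad by (simp add: power2_diff)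
  then have "\<bar>\<sigma>\<^sub>0 - w\<bar> \<le> \<sigma>" using assms(1) by (metis abs_le_square_iff abs_of_nonneg)
  then show ?thesis by (simp add: w_def)
qed

lemma finite_ereal_ratio:
  fixes k :: ereal and e P q :: real
  assumes "0 \<le> k" "0 \<le> e" "0 \<le> P" "0 \<le> q" "k * ereal e \<le> ereal P" "ereal q / k \<noteq> \<infinity>"
  shows "\<exists>\<tau>. ereal q / k = ereal \<tau> \<and> 0 \<le> \<tau> \<and> q * e \<le> \<tau> * P"
proof (cases k)
  case PInf
  then have "e = 0" using assms by (cases "e = 0") auto
  then show ?thesis using PInf by auto
next
  case MInf
  then show ?thesis using assms by simp
next
  case (real b)
  show ?thesis
  proof (cases "b = 0")
    case True
    then have "q = 0"
      using assms real by (cases "q = 0") (auto simp: zero_ereal_def[symmetric] divide_ereal_def)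
    then show ?thesis using real True by (auto simp: zero_ereal_def[symmetric])
  next
    case False
    then have b: "0 < b" using assms real by simp
    have "q * (b * e) \<le> q * P" using assms real by (intro mult_left_mono) auto
    then have "q * e \<le> q / b * P" using b by (simp add: field_simps)
    then show ?thesis using real b assms by (intro exI[of _ "q / b"]) auto
  qed
qed

lemma real_sensitivity_inversion:
  fixes s P \<sigma> r e\<^sub>1 e\<^sub>2 a \<tau>\<^sub>1 \<tau>\<^sub>2 :: real
  assumes "0 < a" "0 < 1 - \<tau>\<^sub>1 - \<tau>\<^sub>2" "a * s \<le> P" "r * e\<^sub>1 \<le> \<tau>\<^sub>1 * P" "r\<^sup>2 * e\<^sub>2 \<le> \<tau>\<^sub>2 * P"
    and P: "P \<le> r * (2 * \<sigma> + e\<^sub>1 + r * e\<^sub>2)"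
  shows "s \<le> 2 * \<sigma> * r / (1 - \<tau>\<^sub>1 - \<tau>\<^sub>2) / a"
proof -
  have "P \<le> 2 * \<sigma> * r + \<tau>\<^sub>1 * P + \<tau>\<^sub>2 * P"
    using assms by (simp add: power2_eq_square algebra_simps)
  then have "P \<le> 2 * \<sigma> * r / (1 - \<tau>\<^sub>1 - \<tau>\<^sub>2)" using assms(2) by (simp add: field_simps)
  moreover have "s \<le> P / a" using assms(1,3) by (simp add: field_simps)
  ultimately show ?thesis using assms(1) by (meson divide_right_mono less_imp_le order_trans)
qed

text \<open>Write \<open>P = |\<Psi> \<Delta>|\<^sub>\<infinity>\<close>; the three
  sensitivities give \<open>\<kappa> s \<le> P\<close>, \<open>\<kappa>\<^sub>1 e\<^sub>1 \<le> P\<close>, \<open>\<kappa>\<^sub>2 e\<^sub>2 \<le> P\<close>, and feasibility gives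
  \<open>P \<le> r (2\<sigma> + e\<^sub>1 + r e\<^sub>2)\<close>.  Eliminating \<open>e\<^sub>1, e\<^sub>2\<close> yields
  \<open>P (1 - r/\<kappa>\<^sub>1 - r\<^sup>2/\<kappa>\<^sub>2) \<le> 2\<sigma>r\<close>, hence the bound on \<open>s\<close>.\<close>
lemma sensitivity_inversion:
  fixes \<kappa> \<kappa>\<^sub>1 \<kappa>\<^sub>2 :: ereal and s P \<sigma> r e\<^sub>1 e\<^sub>2 :: real
  assumes pos: "0 < s" "0 < \<sigma>" "0 < r" "0 \<le> e\<^sub>1" "0 \<le> e\<^sub>2" "0 \<le> P"
    and nonneg: "0 \<le> \<kappa>" "0 \<le> \<kappa>\<^sub>1" "0 \<le> \<kappa>\<^sub>2"
    and sens: "\<kappa> * ereal s \<le> ereal P" "\<kappa>\<^sub>1 * ereal e\<^sub>1 \<le> ereal P" "\<kappa>\<^sub>2 * ereal e\<^sub>2 \<le> ereal P"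
    and P: "P \<le> r * (2 * \<sigma> + e\<^sub>1 + r * e\<^sub>2)"
  shows "ereal s \<le> ereal (2 * \<sigma> * r) / \<kappa> * inverse (max (1 - ereal r / \<kappa>\<^sub>1 - ereal (r\<^sup>2) / \<kappa>\<^sub>2) 0)"
proof -
  define D where "D = max (1 - ereal r / \<kappa>\<^sub>1 - ereal (r\<^sup>2) / \<kappa>\<^sub>2) 0"
  have D0: "0 \<le> D" unfolding D_def by simp
  have D1: "D \<le> 1" unfolding D_def using pos nonneg
    by (auto simp: max_def ereal_diff_le_self zero_le_divide_ereal
        intro: order_trans[OF ereal_diff_le_self])
  have inv_pos: "0 < inverse D"
  proof (cases D)
    case (real d)
    then show ?thesis using D0 by (cases "d = 0") (auto simp: zero_ereal_def[symmetric])
  qed (use D0 D1 in auto)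
  show ?thesis
  proof (cases "\<kappa> = 0")
    case True
    then have "ereal (2 * \<sigma> * r) / \<kappa> = \<infinity>" using pos by (simp add: divide_ereal_def)
    then show ?thesis using inv_pos unfolding D_def[symmetric] by (auto simp: ereal_mult_infty)
  next
    case False
    moreover have "\<kappa> \<noteq> \<infinity>" using pos(1) sens(1) by auto
    ultimately obtain a where a: "\<kappa> = ereal a" "0 < a" using nonneg(1) by (cases \<kappa>) auto
    show ?thesis
    proof (cases "D = 0")
      case True
      then show ?thesis unfolding D_def[symmetric] using pos a by simp
    next
      case False
      then have Dp: "0 < 1 - ereal r / \<kappa>\<^sub>1 - ereal (r\<^sup>2) / \<kappa>\<^sub>2"
        unfolding D_def by (auto simp: max_def split: if_splits)
      have "0 \<le> ereal r / \<kappa>\<^sub>1" "0 \<le> ereal (r\<^sup>2) / \<kappa>\<^sub>2"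
        using pos nonneg by (auto intro: zero_le_divide_ereal)
      then have fin: "ereal r / \<kappa>\<^sub>1 \<noteq> \<infinity>" "ereal (r\<^sup>2) / \<kappa>\<^sub>2 \<noteq> \<infinity>" using Dp
        by (cases "ereal (r\<^sup>2) / \<kappa>\<^sub>2"; cases "ereal r / \<kappa>\<^sub>1"; simp add: one_ereal_def)+
      obtain t1 where t1: "ereal r / \<kappa>\<^sub>1 = ereal t1" "0 \<le> t1" "r * e\<^sub>1 \<le> t1 * P"
        using finite_ereal_ratio[OF nonneg(2) pos(4,6) _ sens(2) fin(1)] pos by auto
      obtain t2 where t2: "ereal (r\<^sup>2) / \<kappa>\<^sub>2 = ereal t2" "0 \<le> t2" "r\<^sup>2 * e\<^sub>2 \<le> t2 * P"
        using finite_ereal_ratio[OF nonneg(3) pos(5,6) _ sens(3) fin(2)] by auto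
      have D: "D = ereal (1 - t1 - t2)" "0 < 1 - t1 - t2"
        using Dp unfolding D_def t1 t2 by (auto simp: one_ereal_def)
      have "s \<le> 2 * \<sigma> * r / (1 - t1 - t2) / a"
        using a D(2) sens(1) t1 t2 P by (intro real_sensitivity_inversion) auto
      then show ?thesis unfolding D_def[symmetric] D using D a by (simp add: field_simps)
    qed
  qed
qed

lemma xstar_ge: "i < n \<Longrightarrow> \<bar>X i k\<bar> \<le> xstar n X k"
  unfolding xstar_def by (rule Max_ge) auto

lemma zstar_ge: "i < n \<Longrightarrow> \<bar>Z i l\<bar> \<le> zstar n Z l"
  unfolding zstar_def by (rule Max_ge) auto

lemma xstar_nonneg: "1 \<le> n \<Longrightarrow> 0 \<le> xstar n X k"
  using xstar_ge[of 0 n X k] by simp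

lemma zstar_nonneg: "1 \<le> n \<Longrightarrow> 0 \<le> zstar n Z l"
  using zstar_ge[of 0 n Z l] by simp

lemma square_le_of_abs_le: "\<bar>a\<bar> \<le> (b::real) \<Longrightarrow> a\<^sup>2 \<le> b\<^sup>2"
  using power_mono[of "\<bar>a\<bar>" b 2] by simp

lemma abs_sum_Cauchy_Schwarz:
  fixes a b :: "nat \<Rightarrow> real"
  shows "\<bar>\<Sum>i\<in>I. a i * b i\<bar> \<le> sqrt (\<Sum>i\<in>I. (a i)\<^sup>2) * sqrt (\<Sum>i\<in>I. (b i)\<^sup>2)"
proof -
  have "(\<Sum>i\<in>I. a i * b i)\<^sup>2 \<le> (\<Sum>i\<in>I. (a i)\<^sup>2) * (\<Sum>i\<in>I. (b i)\<^sup>2)"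
    by (rule Cauchy_Schwarz_ineq_sum)
  then have "sqrt ((\<Sum>i\<in>I. a i * b i)\<^sup>2) \<le> sqrt ((\<Sum>i\<in>I. (a i)\<^sup>2) * (\<Sum>i\<in>I. (b i)\<^sup>2))"
    by (rule real_sqrt_le_mono)
  then show ?thesis by (simp add: real_sqrt_mult)
qed

definition instr_moment :: "nat \<Rightarrow> nat \<Rightarrow> (nat \<Rightarrow> real) \<Rightarrow> (nat \<Rightarrow> nat \<Rightarrow> real)
    \<Rightarrow> (nat \<Rightarrow> nat \<Rightarrow> real) \<Rightarrow> (nat \<Rightarrow> real) \<Rightarrow> nat \<Rightarrow> real" where
  "instr_moment n K Y X Z \<beta> l = (1 / real n) * inverse (zstar n Z l) *
     (\<Sum>i<n. Z i l * (Y i - (\<Sum>k<K. X i k * \<beta> k)))"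

lemma stiv_feasible_iff:
  "stiv_feasible n K L r Y X Z \<beta> \<sigma> \<longleftrightarrow>
     0 < \<sigma> \<and> sup_norm L (instr_moment n K Y X Z \<beta>) \<le> \<sigma> * r \<and> Qhat n K Y X \<beta> \<le> \<sigma>\<^sup>2"
  unfolding stiv_feasible_def instr_moment_def ..

text \<open>A sample is \<^emph>\<open>good\<close> at level \<open>t\<close> when every
  instrument score \<open>\<Sum>\<^sub>i z\<^sub>l\<^sub>i u\<^sub>i\<close> is at most \<open>t\<close> times its self-normaliser; on such samples the
  true parameter is STIV-feasible with \<open>\<sigma>\<close> equal to the oracle noise level \<open>\<sigma>\<^sub>0\<close>, and
  every STIV solution obeys the oracle inequality.\<close>
locale stiv_good_sample =
  fixes n K L kend :: nat and Y u :: "nat \<Rightarrow> real" and X Z :: "nat \<Rightarrow> nat \<Rightarrow> real"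
    and \<beta>s :: "nat \<Rightarrow> real" and t r :: real
  assumes n_pos: "1 \<le> n" and K_le_L: "K \<le> L"
    and t_pos: "0 < t" and r_def: "r = t / sqrt (real n)"
    and model: "\<forall>i<n. Y i = (\<Sum>k<K. X i k * \<beta>s k) + u i"
    and exo: "\<forall>i<n. \<forall>l<K - kend. Z i l = X i (kend + l)"
    and good: "\<forall>l<L. \<bar>\<Sum>i<n. Z i l * u i\<bar> \<le> t * sqrt (\<Sum>i<n. (Z i l * u i)\<^sup>2)"
begin

definition sigma0 :: real where "sigma0 = sqrt ((1 / real n) * (\<Sum>i<n. (u i)\<^sup>2))"
definition err :: "(nat \<Rightarrow> real) \<Rightarrow> nat \<Rightarrow> real" where "err \<beta> k = xstar n X k * (\<beta> k - \<beta>s k)"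
definition fit_gap :: "(nat \<Rightarrow> real) \<Rightarrow> nat \<Rightarrow> real" where
  "fit_gap \<beta> i = (\<Sum>k<K. X i k * (\<beta> k - \<beta>s k))"
definition cross :: "(nat \<Rightarrow> real) \<Rightarrow> real" where
  "cross \<beta> = (1 / real n) * (\<Sum>i<n. u i * fit_gap \<beta> i)"

lemma n_real_pos: "0 < real n"
  using n_pos by simp

lemma r_pos: "0 < r"
  using t_pos n_real_pos by (simp add: r_def)

lemma sigma0_nonneg: "0 \<le> sigma0"
  by (simp add: sigma0_def sum_nonneg)

lemma sigma0_sq: "sigma0\<^sup>2 = (1 / real n) * (\<Sum>i<n. (u i)\<^sup>2)"
  by (simp add: sigma0_def sum_nonneg)

lemma sqrt_sum_u_sq: "sqrt (\<Sum>i<n. (u i)\<^sup>2) = sqrt (real n) * sigma0"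
  using n_real_pos by (simp add: sigma0_def real_sqrt_mult[symmetric])

lemma resid_true: "i < n \<Longrightarrow> Y i - (\<Sum>k<K. X i k * \<beta>s k) = u i"
  using model by simp

lemma resid: "i < n \<Longrightarrow> Y i - (\<Sum>k<K. X i k * \<beta> k) = u i - fit_gap \<beta> i"
  using model by (simp add: fit_gap_def sum_subtractf right_diff_distrib)

lemma Qhat_true: "Qhat n K Y X \<beta>s = sigma0\<^sup>2"
  unfolding Qhat_def sigma0_sq using resid_true by simp

lemma sqrt_n_mult_self: "sqrt (real n) * (sqrt (real n) * a) = real n * a"
  by (simp add: mult.assoc[symmetric])

lemma t_eq: "t = r * sqrt (real n)"
  using n_real_pos by (simp add: r_def)

lemma Qhat_expansion:
  "Qhat n K Y X \<beta> = sigma0\<^sup>2 - 2 * cross \<beta> + (sqrt ((1 / real n) * (\<Sum>i<n. (fit_gap \<beta> i)\<^sup>2)))\<^sup>2"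
proof -
  have "(\<Sum>i<n. (Y i - (\<Sum>k<K. X i k * \<beta> k))\<^sup>2) = (\<Sum>i<n. (u i - fit_gap \<beta> i)\<^sup>2)"
    using resid by simp
  also have "\<dots> = (\<Sum>i<n. (u i)\<^sup>2) - 2 * (\<Sum>i<n. u i * fit_gap \<beta> i) + (\<Sum>i<n. (fit_gap \<beta> i)\<^sup>2)"
    by (simp add: power2_diff sum.distrib sum_subtractf sum_distrib_left mult.assoc)
  finally have eq: "(\<Sum>i<n. (Y i - (\<Sum>k<K. X i k * \<beta> k))\<^sup>2)
      = (\<Sum>i<n. (u i)\<^sup>2) - 2 * (\<Sum>i<n. u i * fit_gap \<beta> i) + (\<Sum>i<n. (fit_gap \<beta> i)\<^sup>2)" .
  show ?thesis
    unfolding Qhat_def eq sigma0_sq cross_def by (simp add: sum_nonneg algebra_simps)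
qed

lemma cross_Cauchy_Schwarz: "cross \<beta> \<le> sigma0 * sqrt ((1 / real n) * (\<Sum>i<n. (fit_gap \<beta> i)\<^sup>2))"
proof -
  have "\<bar>\<Sum>i<n. u i * fit_gap \<beta> i\<bar> \<le> sqrt (\<Sum>i<n. (u i)\<^sup>2) * sqrt (\<Sum>i<n. (fit_gap \<beta> i)\<^sup>2)"
    by (rule abs_sum_Cauchy_Schwarz)
  moreover have "sigma0 * sqrt ((1 / real n) * (\<Sum>i<n. (fit_gap \<beta> i)\<^sup>2))
      = sqrt (\<Sum>i<n. (u i)\<^sup>2) * sqrt (\<Sum>i<n. (fit_gap \<beta> i)\<^sup>2) / real n"
    by (simp add: sigma0_def real_sqrt_divide)
  ultimately show ?thesis
    using n_real_pos unfolding cross_def by (simp add: divide_right_mono)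
qed

lemma sigma0_le:
  assumes feasible: "stiv_feasible n K L r Y X Z \<beta> \<sigma>" and "0 \<le> m" "cross \<beta> \<le> sigma0 * m"
  shows "sigma0 \<le> \<sigma> + m"
proof (rule quadratic_root_bound)
  show "sigma0\<^sup>2 - 2 * cross \<beta> + (sqrt ((1 / real n) * (\<Sum>i<n. (fit_gap \<beta> i)\<^sup>2)))\<^sup>2 \<le> \<sigma>\<^sup>2"
    using feasible unfolding stiv_feasible_iff Qhat_expansion by simp
qed (use assms cross_Cauchy_Schwarz sigma0_nonneg in \<open>auto simp: stiv_feasible_iff sum_nonneg\<close>)

text \<open>Noise scores of the regressors: by Cauchy--Schwarz always \<open>\<le> \<sigma>\<^sub>0 x\<^sub>k\<^sub>*\<close>; on the good
  event the instrument scores, and hence those of the exogenous regressors, are \<open>\<le> r \<sigma>\<^sub>0\<close>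
  times the scale.\<close>
lemma design_score: "\<bar>(1 / real n) * (\<Sum>i<n. u i * X i k)\<bar> \<le> sigma0 * xstar n X k"
proof -
  have "(\<Sum>i<n. (X i k)\<^sup>2) \<le> (\<Sum>i<n. (xstar n X k)\<^sup>2)"
    by (intro sum_mono square_le_of_abs_le xstar_ge) simp
  then have "sqrt (\<Sum>i<n. (X i k)\<^sup>2) \<le> sqrt (real n * (xstar n X k)\<^sup>2)"
    by (intro real_sqrt_le_mono) simp
  then have "sqrt (\<Sum>i<n. (X i k)\<^sup>2) \<le> sqrt (real n) * xstar n X k"
    using xstar_nonneg[OF n_pos] by (simp add: real_sqrt_mult)
  then have "\<bar>\<Sum>i<n. u i * X i k\<bar> \<le> sqrt (real n) * sigma0 * (sqrt (real n) * xstar n X k)"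
    using abs_sum_Cauchy_Schwarz[of u "\<lambda>i. X i k" "{..<n}"] sigma0_nonneg
    unfolding sqrt_sum_u_sq by (simp add: mult_left_mono order_trans)
  then have "\<bar>\<Sum>i<n. u i * X i k\<bar> \<le> sigma0 * xstar n X k * real n"
    by (simp add: sqrt_n_mult_self ac_simps)
  then show ?thesis using n_real_pos by (simp add: abs_mult pos_divide_le_eq)
qed

lemma instrument_score:
  assumes "l < L"
  shows "\<bar>(1 / real n) * (\<Sum>i<n. Z i l * u i)\<bar> \<le> r * sigma0 * zstar n Z l"
proof -
  have "(\<Sum>i<n. (Z i l * u i)\<^sup>2) \<le> (\<Sum>i<n. (zstar n Z l)\<^sup>2 * (u i)\<^sup>2)"
    unfolding power_mult_distrib by (intro sum_mono mult_right_mono square_le_of_abs_le zstar_ge) auto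
  then have "sqrt (\<Sum>i<n. (Z i l * u i)\<^sup>2) \<le> sqrt ((zstar n Z l)\<^sup>2 * (\<Sum>i<n. (u i)\<^sup>2))"
    by (intro real_sqrt_le_mono) (simp add: sum_distrib_left)
  then have "sqrt (\<Sum>i<n. (Z i l * u i)\<^sup>2) \<le> zstar n Z l * sqrt (\<Sum>i<n. (u i)\<^sup>2)"
    using zstar_nonneg[OF n_pos] by (simp add: real_sqrt_mult)
  then have "\<bar>\<Sum>i<n. Z i l * u i\<bar> \<le> t * (zstar n Z l * (sqrt (real n) * sigma0))"
    using good assms t_pos unfolding sqrt_sum_u_sq
    by (meson less_imp_le mult_left_mono order_trans)
  then have "\<bar>\<Sum>i<n. Z i l * u i\<bar> \<le> r * sigma0 * zstar n Z l * real n"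
    unfolding t_eq by (simp add: sqrt_n_mult_self ac_simps)
  then show ?thesis using n_real_pos by (simp add: abs_mult pos_divide_le_eq)
qed

lemma exogenous_score:
  assumes "kend \<le> k" "k < K"
  shows "\<bar>(1 / real n) * (\<Sum>i<n. u i * X i k)\<bar> \<le> r * sigma0 * xstar n X k"
proof -
  define l where "l = k - kend"
  have l: "l < K - kend" "k = kend + l" "l < L" using assms K_le_L unfolding l_def by auto
  have ZX: "Z i l = X i k" if "i < n" for i using exo that l by auto
  have "zstar n Z l = xstar n X k"
    unfolding zstar_def xstar_def using ZX by (intro arg_cong[where f = Max] image_cong) auto
  moreover have "(\<Sum>i<n. u i * X i k) = (\<Sum>i<n. Z i l * u i)" using ZX by (intro sum.cong) auto
  ultimately show ?thesis using instrument_score[OF l(3)] by simp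
qed

lemma abs_err: "\<bar>err \<beta> k\<bar> = xstar n X k * \<bar>\<beta> k - \<beta>s k\<bar>"
  using xstar_nonneg[OF n_pos] by (simp add: err_def abs_mult)

lemma cross_le_weighted:
  assumes score: "\<And>k. k < K \<Longrightarrow> \<bar>(1 / real n) * (\<Sum>i<n. u i * X i k)\<bar> \<le> w k * xstar n X k"
    and w: "\<And>k. 0 \<le> w k"
  shows "cross \<beta> \<le> (\<Sum>k<K. w k * \<bar>err \<beta> k\<bar>)"
proof -
  define d where "d k = \<beta> k - \<beta>s k" for k
  have "cross \<beta> = (\<Sum>k<K. d k * ((1 / real n) * (\<Sum>i<n. u i * X i k)))"
    unfolding cross_def fit_gap_def d_def[symmetric]
    by (simp add: sum_distrib_left sum_distrib_right sum.swap[of _ "{..<n}"] algebra_simps)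
  then have "cross \<beta> = (\<Sum>k<K. (\<beta> k - \<beta>s k) * ((1 / real n) * (\<Sum>i<n. u i * X i k)))"
    by (simp add: d_def)
  also have "\<dots> \<le> (\<Sum>k<K. \<bar>\<beta> k - \<beta>s k\<bar> * (w k * xstar n X k))"
  proof (rule sum_mono)
    fix k assume "k \<in> {..<K}"
    then have "\<bar>(\<beta> k - \<beta>s k) * ((1 / real n) * (\<Sum>i<n. u i * X i k))\<bar>
        \<le> \<bar>\<beta> k - \<beta>s k\<bar> * (w k * xstar n X k)"
      unfolding abs_mult[of "\<beta> k - \<beta>s k"] using score by (intro mult_left_mono) auto
    then show "(\<beta> k - \<beta>s k) * ((1 / real n) * (\<Sum>i<n. u i * X i k))
        \<le> \<bar>\<beta> k - \<beta>s k\<bar> * (w k * xstar n X k)" by linarith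
  qed
  also have "\<dots> = (\<Sum>k<K. w k * \<bar>err \<beta> k\<bar>)" by (simp add: abs_err ac_simps)
  finally show ?thesis .
qed

lemma cross_le_l1: "cross \<beta> \<le> sigma0 * l1_norm K (err \<beta>)"
  using cross_le_weighted[of "\<lambda>_. sigma0" \<beta>] design_score sigma0_nonneg
  by (simp add: l1_norm_def sum_distrib_left)

text \<open>Exogenous coordinates (those \<open>\<ge> k\<^sub>e\<^sub>n\<^sub>d\<close>) have noise scores of order \<open>r \<sigma>\<^sub>0\<close> instead
  of \<open>\<sigma>\<^sub>0\<close>; this produces the \<open>r\<^sup>2/\<kappa>\<^sup>*\<close> term of the bound.\<close>
lemma cross_le_split:
  "cross \<beta> \<le> sigma0 * (l1_norm K (restr {..<kend} (err \<beta>)) + r * l1_norm K (restr {kend..<K} (err \<beta>)))"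
proof -
  have "cross \<beta> \<le> (\<Sum>k<K. (if k < kend then sigma0 else r * sigma0) * \<bar>err \<beta> k\<bar>)"
    using design_score exogenous_score sigma0_nonneg r_pos
    by (intro cross_le_weighted) (auto simp: not_less)
  also have "\<dots> = sigma0 * (l1_norm K (restr {..<kend} (err \<beta>)) + r * l1_norm K (restr {kend..<K} (err \<beta>)))"
    unfolding l1_norm_def restr_def sum_distrib_left sum.distrib[symmetric]
    by (intro sum.cong) auto
  finally show ?thesis .
qed

lemma instr_moment_true:
  assumes "l < L"
  shows "\<bar>instr_moment n K Y X Z \<beta>s l\<bar> \<le> r * sigma0"
proof -
  have "instr_moment n K Y X Z \<beta>s l = inverse (zstar n Z l) * ((1 / real n) * (\<Sum>i<n. Z i l * u i))"
    unfolding instr_moment_def using resid_true by simp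
  also have "\<bar>\<dots>\<bar> \<le> inverse (zstar n Z l) * (r * sigma0 * zstar n Z l)"
    unfolding abs_mult[of "inverse (zstar n Z l)"] abs_inverse abs_of_nonneg[OF zstar_nonneg[OF n_pos]]
    using instrument_score[OF assms] zstar_nonneg[OF n_pos] by (intro mult_left_mono) auto
  also have "\<dots> \<le> r * sigma0"
    using zstar_nonneg[OF n_pos, of Z l] r_pos sigma0_nonneg
    by (cases "zstar n Z l = 0") (auto simp: field_simps)
  finally show ?thesis .
qed

lemma true_feasible:
  assumes "0 < \<sigma>" "sigma0 \<le> \<sigma>"
  shows "stiv_feasible n K L r Y X Z \<beta>s \<sigma>"
proof -
  have "sup_norm L (instr_moment n K Y X Z \<beta>s) \<le> \<sigma> * r"
  proof (rule sup_norm_le)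
    show "0 \<le> \<sigma> * r" using assms r_pos by simp
    have "r * sigma0 \<le> \<sigma> * r" using assms r_pos by (simp add: mult.commute)
    then show "\<bar>instr_moment n K Y X Z \<beta>s l\<bar> \<le> \<sigma> * r" if "l < L" for l
      using instr_moment_true[OF that] by linarith
  qed
  moreover have "Qhat n K Y X \<beta>s \<le> \<sigma>\<^sup>2"
    using assms sigma0_nonneg by (simp add: Qhat_true power_mono)
  ultimately show ?thesis using assms by (simp add: stiv_feasible_iff)
qed

lemma solution_objective:
  assumes sol: "stiv_solution n K L r c Y X Z \<beta> \<sigma>" and c: "0 < c"
  shows "l1_norm K (\<lambda>k. xstar n X k * \<beta> k) + c * \<sigma>
           \<le> l1_norm K (\<lambda>k. xstar n X k * \<beta>s k) + c * sigma0"
proof -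
  define g where "g = (l1_norm K (\<lambda>k. xstar n X k * \<beta> k) + c * \<sigma>
                       - l1_norm K (\<lambda>k. xstar n X k * \<beta>s k)) / c"
  have "g \<le> sigma0"
  proof (rule dense_ge)
    fix \<sigma>' assume "sigma0 < \<sigma>'"
    then have "stiv_feasible n K L r Y X Z \<beta>s \<sigma>'"
      using sigma0_nonneg by (intro true_feasible) auto
    then show "g \<le> \<sigma>'" using sol c unfolding stiv_solution_def g_def by (auto simp: field_simps)
  qed
  then show ?thesis using c unfolding g_def by (simp add: field_simps)
qed

lemma Psi_err: "Psi n K X Z (err \<beta>) l = instr_moment n K Y X Z \<beta>s l - instr_moment n K Y X Z \<beta> l"
proof -
  have inner: "(\<Sum>k<K. X i k * inverse (xstar n X k) * err \<beta> k) = fit_gap \<beta> i" if "i < n" for i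
    unfolding fit_gap_def
  proof (rule sum.cong[OF refl])
    fix k
    show "X i k * inverse (xstar n X k) * err \<beta> k = X i k * (\<beta> k - \<beta>s k)"
      using xstar_ge[OF that, of X k] by (cases "xstar n X k = 0") (auto simp: err_def)
  qed
  have eq: "(\<Sum>i<n. Z i l * (\<Sum>k<K. X i k * inverse (xstar n X k) * err \<beta> k))
      = (\<Sum>i<n. Z i l * (Y i - (\<Sum>k<K. X i k * \<beta>s k))) - (\<Sum>i<n. Z i l * (Y i - (\<Sum>k<K. X i k * \<beta> k)))"
    unfolding sum_subtractf[symmetric]
  proof (rule sum.cong[OF refl])
    fix i assume "i \<in> {..<n}"
    then have i: "i < n" by simp
    show "Z i l * (\<Sum>k<K. X i k * inverse (xstar n X k) * err \<beta> k)
        = Z i l * (Y i - (\<Sum>k<K. X i k * \<beta>s k)) - Z i l * (Y i - (\<Sum>k<K. X i k * \<beta> k))"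
      unfolding resid_true[OF i] resid[OF i] inner[OF i]
      by (simp add: algebra_simps)
  qed
  show ?thesis
    unfolding Psi_def instr_moment_def eq by (simp only: right_diff_distrib)
qed

lemma Psi_err_bound:
  assumes "stiv_feasible n K L r Y X Z \<beta> \<sigma>"
  shows "sup_norm L (Psi n K X Z (err \<beta>)) \<le> r * sigma0 + r * \<sigma>"
proof (rule sup_norm_le)
  show "0 \<le> r * sigma0 + r * \<sigma>"
    using assms r_pos sigma0_nonneg by (simp add: stiv_feasible_iff)
  fix l assume l: "l < L"
  have "\<bar>instr_moment n K Y X Z \<beta> l\<bar> \<le> r * \<sigma>"
    using assms sup_norm_ge[OF l, of "instr_moment n K Y X Z \<beta>"]
    by (simp add: stiv_feasible_iff mult.commute)
  then show "\<bar>Psi n K X Z (err \<beta>) l\<bar> \<le> r * sigma0 + r * \<sigma>"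
    using instr_moment_true[OF l] unfolding Psi_err by linarith
qed

text \<open>The basic inequality: minimality of the STIV objective together with
  \<open>\<sigma>\<^sub>0 \<le> \<sigma> + |\<Delta>|\<^sub>1\<close> forces the error \<open>\<Delta>\<close> off \<open>J\<close> to be controlled by the error on \<open>J\<close>
  and the part of \<open>\<beta>\<^sup>*\<close> off \<open>J\<close>.\<close>
lemma basic_inequality:
  assumes sol: "stiv_solution n K L r c Y X Z \<beta> \<sigma>" and c: "0 < c"
  shows "(1 - c) * l1_norm K (restr ({..<K} - J) (err \<beta>))
           \<le> (1 + c) * l1_norm K (restr J (err \<beta>))
             + 2 * l1_norm K (restr ({..<K} - J) (\<lambda>k. xstar n X k * \<beta>s k))"
proof -
  define v where "v k = xstar n X k * \<beta>s k" for k
  define D1 where "D1 = l1_norm K (restr J (err \<beta>))"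
  define D2 where "D2 = l1_norm K (restr ({..<K} - J) (err \<beta>))"
  define V1 where "V1 = l1_norm K (restr J v)"
  define V2 where "V2 = l1_norm K (restr ({..<K} - J) v)"
  have feasible: "stiv_feasible n K L r Y X Z \<beta> \<sigma>"
    using sol by (simp add: stiv_solution_def)
  have split_\<beta>: "(\<lambda>k. xstar n X k * \<beta> k) = (\<lambda>k. v k + err \<beta> k)"
    by (auto simp: v_def err_def algebra_simps)
  have triangle: "V1 - D1 + D2 - V2 \<le> l1_norm K (\<lambda>k. xstar n X k * \<beta> k)"
    unfolding split_\<beta> V1_def V2_def D1_def D2_def l1_norm_def restr_def
      sum_subtractf[symmetric] sum.distrib[symmetric]
    by (intro sum_mono) auto
  have "sigma0 \<le> \<sigma> + l1_norm K (err \<beta>)"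
    using feasible cross_le_l1 by (intro sigma0_le) (auto simp: l1_norm_nonneg)
  then have "c * sigma0 \<le> c * (\<sigma> + (D1 + D2))"
    using c unfolding D1_def D2_def l1_norm_split[of K "err \<beta>" J] by simp
  then show ?thesis
    using triangle solution_objective[OF sol c] l1_norm_split[of K v J]
    unfolding D1_def[symmetric] D2_def[symmetric] V1_def[symmetric] V2_def[symmetric] v_def[symmetric]
    by (simp add: algebra_simps)
qed

lemma off_cone_bound:
  assumes sol: "stiv_solution n K L r c Y X Z \<beta> \<sigma>" and c: "0 < c" "c < 1" and p: "1 \<le> p"
    and off_cone: "err \<beta> \<notin> cone K c J"
  shows "lp_norm K p (err \<beta>) \<le> 6 * l1_norm K (restr ({..<K} - J) (\<lambda>k. xstar n X k * \<beta>s k)) / (1 - c)"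
proof -
  define D1 where "D1 = l1_norm K (restr J (err \<beta>))"
  define D2 where "D2 = l1_norm K (restr ({..<K} - J) (err \<beta>))"
  define V2 where "V2 = l1_norm K (restr ({..<K} - J) (\<lambda>k. xstar n X k * \<beta>s k))"
  have "(2 + c) * D1 < (1 - c) * D2"
    using off_cone c unfolding cone_def D1_def D2_def by (simp add: field_simps)
  moreover have basic: "(1 - c) * D2 \<le> (1 + c) * D1 + 2 * V2"
    using basic_inequality[OF sol c(1), of J] unfolding D1_def D2_def V2_def .
  ultimately have "D1 \<le> 2 * V2" by (simp add: algebra_simps)
  moreover have "(1 - c) * lp_norm K p (err \<beta>) \<le> (1 - c) * (D1 + D2)"
    using lp_le_l1[OF p, of K "err \<beta>"] l1_norm_split[of K "err \<beta>" J] c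
    unfolding D1_def D2_def by (intro mult_left_mono) auto
  ultimately have "(1 - c) * lp_norm K p (err \<beta>) \<le> 6 * V2"
    using basic by (simp add: algebra_simps)
  then show ?thesis using c unfolding V2_def by (simp add: field_simps)
qed

text \<open>Inside the enlarged cone the sensitivities give the first term: the error on
  \<open>J\<^sub>e\<^sub>n\<^sub>d\<close> and off \<open>J\<^sub>e\<^sub>n\<^sub>d\<close> enters \<open>\<sigma>\<^sub>0 \<le> \<sigma> + e\<^sub>1 + r e\<^sub>2\<close>, and hence
  \<open>|\<Psi>\<^sub>n \<Delta>|\<^sub>\<infinity> \<le> r (2\<sigma> + e\<^sub>1 + r e\<^sub>2)\<close>, which \<open>sensitivity_inversion\<close> solves for \<open>|\<Delta>|\<^sub>p\<close>.\<close>
lemma in_cone_bound: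
  assumes sol: "stiv_solution n K L r c Y X Z \<beta> \<sigma>" and p: "1 \<le> p"
    and in_cone: "err \<beta> \<in> cone K c J" and pos: "0 < lp_norm K p (err \<beta>)"
  shows "ereal (lp_norm K p (err \<beta>)) \<le> ereal (2 * \<sigma> * r) / kappa_p n K L X Z c p J *
           inverse (max (1 - ereal r / kappa_star n K L X Z c {..<kend} J
                           - ereal (r\<^sup>2) / kappa_star n K L X Z c {kend..<K} J) 0)"
proof -
  define e1 where "e1 = l1_norm K (restr {..<kend} (err \<beta>))"
  define e2 where "e2 = l1_norm K (restr {kend..<K} (err \<beta>))"
  have feasible: "stiv_feasible n K L r Y X Z \<beta> \<sigma>"
    using sol by (simp add: stiv_solution_def)
  have "sigma0 \<le> \<sigma> + (e1 + r * e2)"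
    using feasible cross_le_split r_pos
    unfolding e1_def e2_def by (intro sigma0_le) (auto simp: l1_norm_nonneg)
  then have "sup_norm L (Psi n K X Z (err \<beta>)) \<le> r * (2 * \<sigma> + e1 + r * e2)"
    using Psi_err_bound[OF feasible] r_pos by (smt (verit) distrib_left mult_left_mono)
  then show ?thesis
    using feasible r_pos pos unfolding e1_def e2_def
    by (intro sensitivity_inversion kappa_p_nonneg kappa_star_nonneg)
       (auto simp: stiv_feasible_iff l1_norm_nonneg sup_norm_nonneg
          kappa_p_bound[OF in_cone p] kappa_star_bound[OF in_cone])
qed

theorem oracle_inequality:
  assumes sol: "stiv_solution n K L r c Y X Z \<beta> \<sigma>" and c: "0 < c" "c < 1" and p: "1 \<le> p"
  shows "ereal (lp_norm K p (\<lambda>k. xstar n X k * (\<beta> k - \<beta>s k)))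
           \<le> stiv_bound n K L kend c p r X Z \<beta>s \<sigma> J"
proof -
  have target: "(\<lambda>k. xstar n X k * (\<beta> k - \<beta>s k)) = err \<beta>"
    by (simp add: err_def[abs_def])
  consider "lp_norm K p (err \<beta>) \<le> 6 * l1_norm K (restr ({..<K} - J) (\<lambda>k. xstar n X k * \<beta>s k)) / (1 - c)"
    | "err \<beta> \<in> cone K c J" "0 < lp_norm K p (err \<beta>)"
    using off_cone_bound[OF sol c p] lp_norm_nonneg[of K p "err \<beta>"] c
    by (cases "lp_norm K p (err \<beta>) = 0") (auto simp: l1_norm_nonneg)
  then show ?thesis
    unfolding target stiv_bound_def
    by cases (use in_cone_bound[OF sol p] in \<open>auto simp: le_max_iff_disj\<close>)
qed

end

definition centered_moments :: "'a measure \<Rightarrow> real \<Rightarrow> nat \<Rightarrow> (nat \<Rightarrow> 'a \<Rightarrow> real) \<Rightarrow> bool" where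
  "centered_moments M \<delta> m X \<longleftrightarrow>
     (\<forall>i<m. integrable M (X i) \<and> integrable M (\<lambda>\<omega>. \<bar>X i \<omega>\<bar> powr (2 + \<delta>)) \<and>
            (\<integral>\<omega>. X i \<omega> \<partial>M) = 0 \<and> 0 < (\<integral>\<omega>. \<bar>X i \<omega>\<bar> powr (2 + \<delta>) \<partial>M))"

definition lyapunov_ratio :: "'a measure \<Rightarrow> real \<Rightarrow> nat \<Rightarrow> (nat \<Rightarrow> 'a \<Rightarrow> real) \<Rightarrow> real" where
  "lyapunov_ratio M \<delta> m X = sqrt (\<Sum>i<m. \<integral>\<omega>. (X i \<omega>)\<^sup>2 \<partial>M) /
     (\<Sum>i<m. \<integral>\<omega>. \<bar>X i \<omega>\<bar> powr (2 + \<delta>) \<partial>M) powr (1 / (2 + \<delta>))"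

definition sn_tail :: "'a measure \<Rightarrow> nat \<Rightarrow> (nat \<Rightarrow> 'a \<Rightarrow> real) \<Rightarrow> real \<Rightarrow> 'a set" where
  "sn_tail M m X t = {\<omega> \<in> space M. t \<le> (\<Sum>i<m. X i \<omega>) / sqrt (\<Sum>i<m. (X i \<omega>)\<^sup>2)}"

lemma centered_moments_uminus:
  "centered_moments M \<delta> m X \<Longrightarrow> centered_moments M \<delta> m (\<lambda>i \<omega>. - X i \<omega>)"
  by (simp add: centered_moments_def)

lemma lyapunov_ratio_uminus: "lyapunov_ratio M \<delta> m (\<lambda>i \<omega>. - X i \<omega>) = lyapunov_ratio M \<delta> m X"
  by (simp add: lyapunov_ratio_def)

lemma square_le_one_plus_powr:
  fixes x \<delta> :: real
  assumes "0 < \<delta>"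
  shows "x\<^sup>2 \<le> 1 + \<bar>x\<bar> powr (2 + \<delta>)"
proof (cases "\<bar>x\<bar> \<le> 1")
  case True
  then have "x\<^sup>2 \<le> 1" by (simp add: abs_square_le_1)
  then show ?thesis by (smt (verit) powr_ge_zero)
next
  case False
  then have "\<bar>x\<bar> powr 2 \<le> \<bar>x\<bar> powr (2 + \<delta>)" using assms by (intro powr_mono) auto
  then show ?thesis using False by (simp add: powr_numeral)
qed

lemma integrable_square_of_powr:
  fixes f :: "'a \<Rightarrow> real"
  assumes "finite_measure M" "f \<in> borel_measurable M"
    and "integrable M (\<lambda>\<omega>. \<bar>f \<omega>\<bar> powr (2 + \<delta>))" "0 < \<delta>"
  shows "integrable M (\<lambda>\<omega>. (f \<omega>)\<^sup>2)"
proof (rule Bochner_Integration.integrable_bound)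
  interpret finite_measure M by fact
  show "integrable M (\<lambda>\<omega>. 1 + \<bar>f \<omega>\<bar> powr (2 + \<delta>))" using assms(3) by simp
  show "(\<lambda>\<omega>. (f \<omega>)\<^sup>2) \<in> borel_measurable M" using assms(2) by measurable
  show "AE \<omega> in M. norm ((f \<omega>)\<^sup>2) \<le> norm (1 + \<bar>f \<omega>\<bar> powr (2 + \<delta>))"
    using square_le_one_plus_powr[OF assms(4)] by (intro AE_I2) simp
qed

lemma integral_pos_of_not_AE_zero:
  fixes g :: "'a \<Rightarrow> real"
  assumes "integrable M g" "\<And>\<omega>. 0 \<le> g \<omega>" "\<not> (AE \<omega> in M. g \<omega> = 0)"
  shows "0 < (\<integral>\<omega>. g \<omega> \<partial>M)"
  using integral_nonneg_eq_0_iff_AE[OF assms(1)] integral_nonneg_AE[of g M] assms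
  by (auto simp: order.strict_iff_order)

lemma lyapunov_ratio_pos:
  assumes "finite_measure M" "centered_moments M \<delta> m X" "0 < m" "0 < \<delta>"
  shows "0 < lyapunov_ratio M \<delta> m X"
proof -
  have second: "0 < (\<integral>\<omega>. (X i \<omega>)\<^sup>2 \<partial>M)" if "i < m" for i
  proof (rule integral_pos_of_not_AE_zero)
    have int: "integrable M (X i)" "integrable M (\<lambda>\<omega>. \<bar>X i \<omega>\<bar> powr (2 + \<delta>))"
      and pos: "0 < (\<integral>\<omega>. \<bar>X i \<omega>\<bar> powr (2 + \<delta>) \<partial>M)"
      using assms(2) that by (auto simp: centered_moments_def)
    show "integrable M (\<lambda>\<omega>. (X i \<omega>)\<^sup>2)"
      using integrable_square_of_powr[OF assms(1) _ int(2) assms(4)] int(1) by simp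
    show "\<not> (AE \<omega> in M. (X i \<omega>)\<^sup>2 = 0)"
    proof
      assume "AE \<omega> in M. (X i \<omega>)\<^sup>2 = 0"
      then have "AE \<omega> in M. \<bar>X i \<omega>\<bar> powr (2 + \<delta>) = 0" by eventually_elim simp
      then show False using pos integral_cong_AE[of _ M "\<lambda>_. 0"] int by (simp add: integral_eq_zero_AE)
    qed
  qed simp
  have "0 < (\<Sum>i<m. \<integral>\<omega>. (X i \<omega>)\<^sup>2 \<partial>M)" using second assms(3) by (intro sum_pos) auto
  moreover have "0 < (\<Sum>i<m. \<integral>\<omega>. \<bar>X i \<omega>\<bar> powr (2 + \<delta>) \<partial>M)"
    using assms(2,3) by (intro sum_pos) (auto simp: centered_moments_def)
  ultimately show ?thesis unfolding lyapunov_ratio_def by simp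
qed

text \<open>The Jing--Shao--Wang bound, specialised to a threshold \<open>t \<le> d\<close> where \<open>d > 0\<close> is a
  lower bound for the Lyapunov ratio; in particular the constant \<open>A\<^sub>0\<close> is nonnegative, so the
  error term may be evaluated at \<open>d\<close> instead of the ratio itself.\<close>
lemma jsw_tail_bound:
  assumes jsw: "jsw_constant M A0" and \<delta>: "0 < \<delta>" "\<delta> \<le> 1" and m: "0 < m"
    and indep: "prob_space.indep_vars M (\<lambda>_. borel) X {..<m}"
    and mom: "centered_moments M \<delta> m X"
    and t: "0 \<le> t" "t \<le> d" and d: "0 < d" "d \<le> lyapunov_ratio M \<delta> m X"
  shows "measure M (sn_tail M m X t)
           \<le> 1 - Phi t + A0 * (1 + t) powr (1 + \<delta>) * exp (- t\<^sup>2 / 2) / d powr (2 + \<delta>)"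
proof -
  define \<rho> where "\<rho> = lyapunov_ratio M \<delta> m X"
  define T where "T = (1 + t) powr (1 + \<delta>) * exp (- t\<^sup>2 / 2)"
  have T: "0 < T" using t by (simp add: T_def)
  have \<rho>: "0 < \<rho>" using d by (simp add: \<rho>_def)
  have jsw_at_t: "\<bar>measure M (sn_tail M m X t) - (1 - Phi t)\<bar> \<le> A0 * T / \<rho> powr (2 + \<delta>)"
    using jsw \<delta> m indep mom t d
    unfolding jsw_constant_def centered_moments_def Let_def sn_tail_def T_def \<rho>_def lyapunov_ratio_def
    by (auto simp: mult.assoc)
  then have "0 \<le> A0 * T / \<rho> powr (2 + \<delta>)" by (rule order_trans[OF abs_ge_zero])
  then have "0 \<le> A0" using T \<rho> by (simp add: zero_le_divide_iff zero_le_mult_iff)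
  then have "A0 * T / \<rho> powr (2 + \<delta>) \<le> A0 * T / d powr (2 + \<delta>)"
    using T d \<delta> by (intro divide_left_mono powr_mono2 mult_pos_pos) (auto simp: \<rho>_def)
  then show ?thesis using jsw_at_t by (simp add: T_def mult.assoc)
qed

lemma sn_tail_sets:
  assumes "\<And>i. i < m \<Longrightarrow> X i \<in> borel_measurable M"
  shows "sn_tail M m X t \<in> sets M"
proof -
  have "(\<lambda>\<omega>. (\<Sum>i<m. X i \<omega>) / sqrt (\<Sum>i<m. (X i \<omega>)\<^sup>2)) \<in> borel_measurable M"
    using assms by measurable
  then show ?thesis unfolding sn_tail_def by measurable
qed

lemma outside_sn_tails:
  fixes a :: "nat \<Rightarrow> real"
  assumes "\<not> t \<le> (\<Sum>i<m. a i) / sqrt (\<Sum>i<m. (a i)\<^sup>2)"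
    and "\<not> t \<le> (\<Sum>i<m. - a i) / sqrt (\<Sum>i<m. (- a i)\<^sup>2)"
  shows "0 < t \<and> \<bar>\<Sum>i<m. a i\<bar> \<le> t * sqrt (\<Sum>i<m. (a i)\<^sup>2)"
proof -
  define V where "V = (\<Sum>i<m. (a i)\<^sup>2)"
  have lt: "(\<Sum>i<m. a i) / sqrt V < t" "- (\<Sum>i<m. a i) / sqrt V < t"
    using assms by (auto simp: V_def sum_negf)
  have "\<bar>\<Sum>i<m. a i\<bar> \<le> t * sqrt V"
  proof (cases "V = 0")
    case True
    then have "\<forall>i\<in>{..<m}. (a i)\<^sup>2 = 0" unfolding V_def by (subst sum_nonneg_eq_0_iff[symmetric]) auto
    then show ?thesis using True by simp
  next
    case False
    moreover have "0 \<le> V" by (simp add: V_def sum_nonneg)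
    ultimately have pos: "0 < sqrt V" by simp
    have "(\<Sum>i<m. a i) < t * sqrt V" "- (\<Sum>i<m. a i) < t * sqrt V"
      using lt pos_divide_less_eq[OF pos, of "\<Sum>i<m. a i" t]
        pos_divide_less_eq[OF pos, of "- (\<Sum>i<m. a i)" t] by auto
    then show ?thesis by linarith
  qed
  then show ?thesis using lt by (auto simp: V_def)
qed

lemma two_sided_tail_bound:
  assumes M: "prob_space M" and jsw: "jsw_constant M A0" and \<delta>: "0 < \<delta>" "\<delta> \<le> 1" and m: "0 < m"
    and indep: "prob_space.indep_vars M (\<lambda>_. borel) X {..<m}"
    and mom: "centered_moments M \<delta> m X"
    and t: "0 \<le> t" "t \<le> d" and d: "0 < d" "d \<le> lyapunov_ratio M \<delta> m X"
  shows "sn_tail M m X t \<union> sn_tail M m (\<lambda>i \<omega>. - X i \<omega>) t \<in> sets M"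
    and "measure M (sn_tail M m X t \<union> sn_tail M m (\<lambda>i \<omega>. - X i \<omega>) t)
           \<le> 2 * (1 - Phi t + A0 * (1 + t) powr (1 + \<delta>) * exp (- t\<^sup>2 / 2) / d powr (2 + \<delta>))"
proof -
  interpret prob_space M by (rule M)
  have sets: "sn_tail M m X t \<in> sets M" "sn_tail M m (\<lambda>i \<omega>. - X i \<omega>) t \<in> sets M"
    using mom unfolding centered_moments_def by (auto intro!: sn_tail_sets borel_measurable_integrable)
  then show "sn_tail M m X t \<union> sn_tail M m (\<lambda>i \<omega>. - X i \<omega>) t \<in> sets M" by auto
  have indep_neg: "indep_vars (\<lambda>_. borel) (\<lambda>i \<omega>. - X i \<omega>) {..<m}"
    using indep_vars_compose2[OF indep, of "\<lambda>_ x. - x" "\<lambda>_. borel"] by simp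
  have "measure M (sn_tail M m X t)
      \<le> 1 - Phi t + A0 * (1 + t) powr (1 + \<delta>) * exp (- t\<^sup>2 / 2) / d powr (2 + \<delta>)"
    using jsw \<delta> m indep mom t d by (rule jsw_tail_bound)
  moreover have "measure M (sn_tail M m (\<lambda>i \<omega>. - X i \<omega>) t)
      \<le> 1 - Phi t + A0 * (1 + t) powr (1 + \<delta>) * exp (- t\<^sup>2 / 2) / d powr (2 + \<delta>)"
    using jsw \<delta> m indep_neg centered_moments_uminus[OF mom] t d
    by (intro jsw_tail_bound) (auto simp: lyapunov_ratio_uminus)
  ultimately show "measure M (sn_tail M m X t \<union> sn_tail M m (\<lambda>i \<omega>. - X i \<omega>) t)
      \<le> 2 * (1 - Phi t + A0 * (1 + t) powr (1 + \<delta>) * exp (- t\<^sup>2 / 2) / d powr (2 + \<delta>))"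
    using measure_Un_le[OF sets] by simp
qed

lemma good_event:
  fixes W :: "nat \<Rightarrow> nat \<Rightarrow> 'a \<Rightarrow> real"
  assumes M: "prob_space M" and jsw: "jsw_constant M A0" and \<delta>: "0 < \<delta>" "\<delta> \<le> 1"
    and m: "0 < m" and L: "0 < L"
    and indep: "\<And>l. l < L \<Longrightarrow> prob_space.indep_vars M (\<lambda>_. borel) (\<lambda>i. W i l) {..<m}"
    and mom: "\<And>l. l < L \<Longrightarrow> centered_moments M \<delta> m (\<lambda>i. W i l)"
    and t: "0 \<le> t" "t \<le> d"
    and d: "0 < d" "\<And>l. l < L \<Longrightarrow> d \<le> lyapunov_ratio M \<delta> m (\<lambda>i. W i l)"
  shows "\<exists>E\<in>sets M.
           1 - real L * (2 * (1 - Phi t + A0 * (1 + t) powr (1 + \<delta>) * exp (- t\<^sup>2 / 2) / d powr (2 + \<delta>)))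
             \<le> measure M E \<and>
           (\<forall>\<omega>\<in>E. 0 < t \<and> (\<forall>l<L. \<bar>\<Sum>i<m. W i l \<omega>\<bar> \<le> t * sqrt (\<Sum>i<m. (W i l \<omega>)\<^sup>2)))"
proof -
  interpret prob_space M by (rule M)
  define tail where "tail = 1 - Phi t + A0 * (1 + t) powr (1 + \<delta>) * exp (- t\<^sup>2 / 2) / d powr (2 + \<delta>)"
  define bad where "bad l = sn_tail M m (\<lambda>i. W i l) t \<union> sn_tail M m (\<lambda>i \<omega>. - W i l \<omega>) t" for l
  define E where "E = space M - (\<Union>l<L. bad l)"
  have bad_sets: "bad l \<in> sets M" and bad_measure: "measure M (bad l) \<le> 2 * tail"
    if "l < L" for l
    using two_sided_tail_bound[OF M jsw \<delta> m indep[OF that] mom[OF that] t d(1) d(2)[OF that]]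
    unfolding bad_def tail_def by auto
  have "measure M (\<Union>l<L. bad l) \<le> (\<Sum>l<L. 2 * tail)"
    using finite_measure_subadditive_finite[of "{..<L}" bad] bad_sets bad_measure
      sum_mono[of "{..<L}" "\<lambda>l. measure M (bad l)" "\<lambda>_. 2 * tail"]
    by (auto intro: order_trans)
  then have "1 - real L * (2 * tail) \<le> measure M E"
    using prob_compl[of "\<Union>l<L. bad l"] bad_sets unfolding E_def by auto
  moreover have "E \<in> sets M" unfolding E_def using bad_sets by auto
  moreover have "0 < t \<and> (\<forall>l<L. \<bar>\<Sum>i<m. W i l \<omega>\<bar> \<le> t * sqrt (\<Sum>i<m. (W i l \<omega>)\<^sup>2))"
    if "\<omega> \<in> E" for \<omega>
  proof -
    have "0 < t \<and> \<bar>\<Sum>i<m. W i l \<omega>\<bar> \<le> t * sqrt (\<Sum>i<m. (W i l \<omega>)\<^sup>2)" if "l < L" for l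
      using \<open>\<omega> \<in> E\<close> that unfolding E_def bad_def sn_tail_def
      by (intro outside_sn_tails) auto
    then show ?thesis using L by blast
  qed
  ultimately show ?thesis unfolding tail_def by blast
qed

lemma d_ndelta_props:
  assumes "finite_measure M" "0 < L" "0 < n" "0 < \<delta>"
    and mom: "\<And>l. l < L \<Longrightarrow> centered_moments M \<delta> n (\<lambda>i. W i l)"
  shows "0 < d_ndelta M n L \<delta> W" "\<And>l. l < L \<Longrightarrow> d_ndelta M n L \<delta> W \<le> lyapunov_ratio M \<delta> n (\<lambda>i. W i l)"
proof -
  have eq: "d_ndelta M n L \<delta> W = Min ((\<lambda>l. lyapunov_ratio M \<delta> n (\<lambda>i. W i l)) ` {..<L})"
    by (simp add: d_ndelta_def lyapunov_ratio_def)
  show "d_ndelta M n L \<delta> W \<le> lyapunov_ratio M \<delta> n (\<lambda>i. W i l)" if "l < L" for l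
    unfolding eq using that by simp
  show "0 < d_ndelta M n L \<delta> W"
    unfolding eq using assms(2,3)
    by (subst Min_gr_iff) (auto intro!: lyapunov_ratio_pos[OF assms(1) mom _ assms(4)])
qed

text \<open>The growth condition \<open>L \<le> exp(d\<^sup>2/(2A\<^sup>2))\<close> says exactly that the threshold
  \<open>A (2 log L)\<^sup>1\<^sup>/\<^sup>2\<close> lies in the range \<open>[0, d]\<close> of the moderate deviation bound.\<close>
lemma threshold_le_d:
  assumes L: "1 \<le> L" and A: "0 < A" and d: "0 < d" and Lbound: "real L \<le> exp (d\<^sup>2 / (2 * A\<^sup>2))"
  shows "A * sqrt (2 * ln (real L)) \<le> d"
proof -
  have "ln (real L) \<le> ln (exp (d\<^sup>2 / (2 * A\<^sup>2)))"
    using Lbound L by (subst ln_le_cancel_iff) auto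
  then have "ln (real L) \<le> d\<^sup>2 / (2 * A\<^sup>2)" by simp
  then have "(A * sqrt (2 * ln (real L)))\<^sup>2 \<le> d\<^sup>2"
    using A L by (simp add: power_mult_distrib field_simps)
  then show ?thesis using d by (simp add: power2_le_iff_abs_le)
qed

text \<open>With \<open>t = A (2 log L)\<^sup>1\<^sup>/\<^sup>2\<close> one has \<open>L e\<^sup>-\<^sup>t\<^sup>\<^sup>2\<^sup>/\<^sup>2 = L\<^sup>1\<^sup>-\<^sup>A\<^sup>2\<close>, which turns the union bound
  into the probability \<open>\<alpha>\<close> of the theorem.\<close>
lemma alpha_identity:
  assumes L: "1 \<le> L" and t: "t = A * sqrt (2 * ln (real L))"
  shows "real L * (2 * (1 - Phi t + A0 * (1 + t) powr (1 + \<delta>) * exp (- t\<^sup>2 / 2) / d powr (2 + \<delta>)))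
     = stiv_alpha L A \<delta> A0 d"
proof -
  have "- t\<^sup>2 / 2 = - (A\<^sup>2 * ln (real L))" unfolding t using L by (simp add: power_mult_distrib)
  then have "real L * exp (- t\<^sup>2 / 2) = exp (ln (real L)) * exp (- (A\<^sup>2 * ln (real L)))"
    using L by simp
  also have "\<dots> = exp (- ((A\<^sup>2 - 1) * ln (real L)))" by (simp add: exp_add[symmetric] algebra_simps)
  also have "\<dots> = 1 / real L powr (A\<^sup>2 - 1)"
    using L by (simp add: powr_def exp_minus inverse_eq_divide)
  finally have "real L * exp (- t\<^sup>2 / 2) = 1 / real L powr (A\<^sup>2 - 1)" .
  moreover have "real L * (2 * (1 - Phi t + A0 * (1 + t) powr (1 + \<delta>) * exp (- t\<^sup>2 / 2) / d powr (2 + \<delta>)))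
      = 2 * real L * (1 - Phi t)
        + 2 * A0 * (1 + t) powr (1 + \<delta>) * (real L * exp (- t\<^sup>2 / 2)) / d powr (2 + \<delta>)"
    by (simp add: algebra_simps)
  ultimately show ?thesis
    unfolding stiv_alpha_def t[symmetric] by simp
qed

lemma score_map_measurable:
  "(\<lambda>v::real \<times> (nat \<Rightarrow> real) \<times> (nat \<Rightarrow> real) \<times> real. fst (snd (snd v)) l * snd (snd (snd v)))
     \<in> borel_measurable borel"
  by (intro borel_measurable_continuous_onI continuous_intros
      continuous_on_compose2[OF continuous_on_product_coordinates]) auto

lemma instrument_scores_indep:
  fixes y u :: "'a \<Rightarrow> nat \<Rightarrow> real" and x z :: "'a \<Rightarrow> nat \<Rightarrow> nat \<Rightarrow> real"
  assumes "prob_space M" and "l < L"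
    and indep: "prob_space.indep_vars M (\<lambda>_. borel)
       (\<lambda>i \<omega>. (y \<omega> i, (\<lambda>k. if k < K then x \<omega> i k else 0),
                (\<lambda>l. if l < L then z \<omega> i l else 0), u \<omega> i)) {..<n}"
  shows "prob_space.indep_vars M (\<lambda>_. borel) (\<lambda>i \<omega>. z \<omega> i l * u \<omega> i) {..<n}"
  using prob_space.indep_vars_compose2[OF assms(1) indep,
      of "\<lambda>_ v. fst (snd (snd v)) l * snd (snd (snd v))" "\<lambda>_. borel"]
    score_map_measurable \<open>l < L\<close> by simp

lemma instrument_scores_moments:
  fixes W :: "nat \<Rightarrow> 'a \<Rightarrow> real"
  assumes "\<forall>i<n. integrable M (W i) \<and> integrable M (\<lambda>\<omega>. \<bar>W i \<omega>\<bar> powr (2 + \<delta>))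
                   \<and> (\<integral>\<omega>. W i \<omega> \<partial>M) = 0 \<and> \<not> (AE \<omega> in M. W i \<omega> = 0)"
  shows "centered_moments M \<delta> n W"
  unfolding centered_moments_def
  using assms by (auto intro!: integral_pos_of_not_AE_zero)

lemma instrument_good_event:
  fixes M :: "'a measure" and n K L :: nat
    and y u :: "'a \<Rightarrow> nat \<Rightarrow> real" and x z :: "'a \<Rightarrow> nat \<Rightarrow> nat \<Rightarrow> real" and \<delta> A A0 :: real
  assumes M: "prob_space M" and n: "0 < n" and L: "0 < L"
    and indep: "prob_space.indep_vars M (\<lambda>_. borel)
       (\<lambda>i \<omega>. (y \<omega> i, (\<lambda>k. if k < K then x \<omega> i k else 0),
                (\<lambda>l. if l < L then z \<omega> i l else 0), u \<omega> i)) {..<n}"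
    and A1: "\<forall>i<n. \<forall>l<L. integrable M (\<lambda>\<omega>. z \<omega> i l * u \<omega> i)
              \<and> integrable M (\<lambda>\<omega>. \<bar>z \<omega> i l * u \<omega> i\<bar> powr (2 + \<delta>))
              \<and> (\<integral>\<omega>. z \<omega> i l * u \<omega> i \<partial>M) = 0
              \<and> \<not> (AE \<omega> in M. z \<omega> i l * u \<omega> i = 0)"
    and \<delta>: "0 < \<delta>" "\<delta> \<le> 1" and A: "1 \<le> A" and jsw: "jsw_constant M A0"
    and Lbound: "real L \<le> exp ((d_ndelta M n L \<delta> (\<lambda>i l \<omega>. z \<omega> i l * u \<omega> i))\<^sup>2 / (2 * A\<^sup>2))"
  shows "\<exists>E\<in>sets M.
     1 - stiv_alpha L A \<delta> A0 (d_ndelta M n L \<delta> (\<lambda>i l \<omega>. z \<omega> i l * u \<omega> i)) \<le> measure M E \<and>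
     (\<forall>\<omega>\<in>E. 0 < A * sqrt (2 * ln (real L)) \<and>
        (\<forall>l<L. \<bar>\<Sum>i<n. z \<omega> i l * u \<omega> i\<bar>
                 \<le> A * sqrt (2 * ln (real L)) * sqrt (\<Sum>i<n. (z \<omega> i l * u \<omega> i)\<^sup>2)))"
proof -
  define W where "W = (\<lambda>i l \<omega>. z \<omega> i l * u \<omega> i)"
  define d where "d = d_ndelta M n L \<delta> W"
  define t where "t = A * sqrt (2 * ln (real L))"
  have mom: "centered_moments M \<delta> n (\<lambda>i. W i l)" if "l < L" for l
    using A1 that unfolding W_def by (intro instrument_scores_moments) auto
  have indep_W: "prob_space.indep_vars M (\<lambda>_. borel) (\<lambda>i. W i l) {..<n}" if "l < L" for l
    using instrument_scores_indep[OF M that indep] unfolding W_def .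
  have d: "0 < d" "\<And>l. l < L \<Longrightarrow> d \<le> lyapunov_ratio M \<delta> n (\<lambda>i. W i l)"
    using d_ndelta_props[OF _ L n \<delta>(1) mom] M unfolding d_def prob_space_def by auto
  have t: "0 \<le> t" "t \<le> d"
    using A L d(1) Lbound threshold_le_d[of L A d] unfolding t_def d_def W_def by auto
  have "real L * (2 * (1 - Phi t + A0 * (1 + t) powr (1 + \<delta>) * exp (- t\<^sup>2 / 2) / d powr (2 + \<delta>)))
      = stiv_alpha L A \<delta> A0 d"
    using L by (intro alpha_identity t_def) simp
  moreover have "\<exists>E\<in>sets M.
      1 - real L * (2 * (1 - Phi t + A0 * (1 + t) powr (1 + \<delta>) * exp (- t\<^sup>2 / 2) / d powr (2 + \<delta>)))
        \<le> measure M E \<and>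
      (\<forall>\<omega>\<in>E. 0 < t \<and> (\<forall>l<L. \<bar>\<Sum>i<n. W i l \<omega>\<bar> \<le> t * sqrt (\<Sum>i<n. (W i l \<omega>)\<^sup>2)))"
    using M jsw \<delta> n L indep_W mom t d by (rule good_event)
  ultimately show ?thesis unfolding d_def W_def t_def by simp
qed

theorem theorem4:
  fixes M :: "'a measure" and n K L kend :: nat
    and y u :: "'a \<Rightarrow> nat \<Rightarrow> real" and x z :: "'a \<Rightarrow> nat \<Rightarrow> nat \<Rightarrow> real"
    and \<beta>s :: "nat \<Rightarrow> real" and \<delta> A A0 c :: real and p :: ereal
  assumes M: "prob_space M"
    and dims: "1 \<le> n" "1 \<le> K" "K \<le> L" "kend \<le> K"
    and c: "0 < c" "c < 1"
    and model: "\<forall>\<omega>\<in>space M. \<forall>i<n. y \<omega> i = (\<Sum>k<K. x \<omega> i k * \<beta>s k) + u \<omega> i"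
    and exo: "\<forall>\<omega>\<in>space M. \<forall>i<n. \<forall>l<K - kend. z \<omega> i l = x \<omega> i (kend + l)"
    and indep: "prob_space.indep_vars M (\<lambda>_. borel)
       (\<lambda>i \<omega>. (y \<omega> i, (\<lambda>k. if k < K then x \<omega> i k else 0),
                (\<lambda>l. if l < L then z \<omega> i l else 0), u \<omega> i)) {..<n}"
    and A1: "\<forall>i<n. \<forall>l<L. integrable M (\<lambda>\<omega>. z \<omega> i l * u \<omega> i)
              \<and> integrable M (\<lambda>\<omega>. \<bar>z \<omega> i l * u \<omega> i\<bar> powr (2 + \<delta>))
              \<and> (\<integral>\<omega>. z \<omega> i l * u \<omega> i \<partial>M) = 0
              \<and> \<not> (AE \<omega> in M. z \<omega> i l * u \<omega> i = 0)"
    and \<delta>: "0 < \<delta>" "\<delta> \<le> 1"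
    and A: "1 \<le> A"
    and jsw: "jsw_constant M A0"
    and Lbound: "real L \<le> exp ((d_ndelta M n L \<delta> (\<lambda>i l \<omega>. z \<omega> i l * u \<omega> i))\<^sup>2 / (2 * A\<^sup>2))"
    and p: "1 \<le> p"
  shows "\<exists>E\<in>sets M.
     measure M E \<ge> 1 - stiv_alpha L A \<delta> A0 (d_ndelta M n L \<delta> (\<lambda>i l \<omega>. z \<omega> i l * u \<omega> i)) \<and>
     (\<forall>\<omega>\<in>E. \<forall>\<beta>h \<sigma>h.
        stiv_solution n K L (A * sqrt (2 * ln (real L) / real n)) c (y \<omega>) (x \<omega>) (z \<omega>) \<beta>h \<sigma>h \<longrightarrow>
        ereal (lp_norm K p (\<lambda>k. xstar n (x \<omega>) k * (\<beta>h k - \<beta>s k)))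
          \<le> Min ((\<lambda>J. stiv_bound n K L kend c p (A * sqrt (2 * ln (real L) / real n))
                       (x \<omega>) (z \<omega>) \<beta>s \<sigma>h J) ` Pow {..<K}))"
proof -
  define t where "t = A * sqrt (2 * ln (real L))"
  define r where "r = A * sqrt (2 * ln (real L) / real n)"
  obtain E where E: "E \<in> sets M"
      "1 - stiv_alpha L A \<delta> A0 (d_ndelta M n L \<delta> (\<lambda>i l \<omega>. z \<omega> i l * u \<omega> i)) \<le> measure M E"
    and good: "\<forall>\<omega>\<in>E. 0 < t \<and> (\<forall>l<L. \<bar>\<Sum>i<n. z \<omega> i l * u \<omega> i\<bar>
                                      \<le> t * sqrt (\<Sum>i<n. (z \<omega> i l * u \<omega> i)\<^sup>2))"
    using instrument_good_event[OF M _ _ indep A1 \<delta> A jsw Lbound] dims unfolding t_def by auto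
  have "ereal (lp_norm K p (\<lambda>k. xstar n (x \<omega>) k * (\<beta>h k - \<beta>s k)))
          \<le> Min ((\<lambda>J. stiv_bound n K L kend c p r (x \<omega>) (z \<omega>) \<beta>s \<sigma>h J) ` Pow {..<K})"
    if "\<omega> \<in> E" and sol: "stiv_solution n K L r c (y \<omega>) (x \<omega>) (z \<omega>) \<beta>h \<sigma>h" for \<omega> \<beta>h \<sigma>h
  proof -
    have "\<omega> \<in> space M" using E(1) \<open>\<omega> \<in> E\<close> sets.sets_into_space by auto
    then interpret stiv_good_sample n K L kend "y \<omega>" "u \<omega>" "x \<omega>" "z \<omega>" \<beta>s t r
      using dims model exo good \<open>\<omega> \<in> E\<close>
      by unfold_locales (auto simp: r_def t_def real_sqrt_divide)
    show ?thesis using oracle_inequality[OF sol c p] by (subst Min_ge_iff) auto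
  qed
  then show ?thesis using E unfolding r_def by blast
qed

end
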